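(* Let $B, C_{in}, C_{out}, W_{in}, H_{in}, W_{out}, H_{out}$ be positive integers, and let $f:\mathbb{R}^{B\times C_{in}\times W_{in}\times H_{in}}\to\mathbb{R}^{B\times C_{out}\times W_{out}\times H_{out}}$ be the operation on an intermediate edge, of the form $f=\mathrm{BN}\circ K\circ\rho$, where: (i) $\rho$ is either the identity or the elementwise ReLU $t\mapsto\max(t,0)$; (ii) $K$ is either a 2D convolution without bias, $K(\mathbf{X})_{b,c_{out},w,h}=\sum_{c_{in}}\sum_{p,q}W_{c_{out},c_{in},p,q}\,\mathbf{X}_{b,c_{in},w+p,h+q}$ for a fixed filter $W$, or a max pooling or average pooling layer; (iii) $\mathrm{BN}$ is batch normalization with batch statistics: writing $d$ for the spatial index ranging over $D=W_{out}H_{out}$ positions, for input $\mathbf{Y}$ one sets $\mu_c=\frac{1}{BD}\sum_{b,d}\mathbf{Y}_{b,c,d}$, $\sigma_c^2=\frac{1}{BD}\sum_{b,d}(\mathbf{Y}_{b,c,d}-\mu_c)^2$, and $\mathrm{BN}(\mathbf{Y})_{b,c,d}=\gamma_c\frac{\mathbf{Y}_{b,c,d}-\mu_c}{\sqrt{\sigma_c^2}}+\beta_c$ with fixed parameters $\gamma_c,\beta_c\in\mathbb{R}$. Let $\mathbf{X}$ be an input at which $f$ is differentiable and for which $\sigma_c^2>0$ for all $c$, and let $L$ be any differentiable scalar function of the output $f(\mathbf{X})$ (e.g. a training loss depending on $\mathbf{X}$ only through this edge). Then the cost passed back through this edge vanishes: $$\sum_{b,c,w,h}\frac{\partial L}{\partial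 \mathbf{X}_{b,c,w,h}}\,\mathbf{X}_{b,c,w,h}=\Big\langle Df(\mathbf{X})^{\top}\frac{\partial L}{\partial f(\mathbf{X})},\,\mathbf{X}\Big\rangle=0.$$
   Context: In cell-based differentiable neural architecture search, a cell is a directed acyclic graph whose nodes are feature maps (tensors indexed by batch $b$, channel $c$, and spatial positions) and whose edges carry operations. An intermediate edge is an edge between two intermediate nodes of the cell. The "cost" of an edge with output feature map $\mathbf{X}$ is $\sum \frac{\partial L}{\partial \mathbf{X}}\odot \mathbf{X}$ (sum over all entries), and the claim concerns the part of the cost of a preceding edge that is back-propagated through an intermediate edge whose input is $\mathbf{X}$. The operation on the intermediate edge is assumed to be one of the non-skip candidates described (ReLU–convolution–BN or pooling–BN). *)

theory Defs
  imports "HOL-Analysis.Analysis"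
begin

text \<open>Tensors of shape (B, C, W, H) are vectors indexed by a product of finite
  types 'b, 'c, 'w, 'h; the sizes are CARD('b) etc. (all positive automatically).
  Spatial positions carry explicit enumerations e :: 'w \<Rightarrow> nat, bijective onto
  the range 0..CARD('w)-1, so that index arithmetic w + p is available.\<close>

type_synonym ('b,'c,'w,'h) tensor = "real ^ ('b \<times> 'c \<times> 'w \<times> 'h)"

definition relu :: "real ^ 'n \<Rightarrow> real ^ 'n" where
  "relu X = (\<chi> i. max (X $ i) 0)"

text \<open>Zero-padded access to the input at integer spatial position (i, j).\<close>
definition padded ::
  "('wi \<Rightarrow> nat) \<Rightarrow> ('hi \<Rightarrow> nat) \<Rightarrow> ('b::finite,'ci::finite,'wi::finite,'hi::finite) tensor
   \<Rightarrow> 'b \<Rightarrow> 'ci \<Rightarrow> int \<Rightarrow> int \<Rightarrow> real" where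
  "padded ewi ehi X b ci i j =
     (\<Sum>w'\<in>{w'. int (ewi w') = i}. \<Sum>h'\<in>{h'. int (ehi h') = j}. X $ (b, ci, w', h'))"

definition conv2d ::
  "('wi \<Rightarrow> nat) \<Rightarrow> ('hi \<Rightarrow> nat) \<Rightarrow> ('wo \<Rightarrow> nat) \<Rightarrow> ('ho \<Rightarrow> nat) \<Rightarrow> int set \<Rightarrow> int set
   \<Rightarrow> ('co \<Rightarrow> 'ci \<Rightarrow> int \<Rightarrow> int \<Rightarrow> real)
   \<Rightarrow> ('b::finite,'ci::finite,'wi::finite,'hi::finite) tensor
   \<Rightarrow> ('b,'co::finite,'wo::finite,'ho::finite) tensor" where
  "conv2d ewi ehi ewo eho P Q Wt X =
     (\<chi> idx. case idx of (b, co, w, h) \<Rightarrow>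
        (\<Sum>ci\<in>UNIV. \<Sum>p\<in>P. \<Sum>q\<in>Q.
           Wt co ci p q * padded ewi ehi X b ci (int (ewo w) + p) (int (eho h) + q)))"

text \<open>Max / average pooling: output channel c is the input channel ch c (ch a
  bijection, i.e. C_out = C_in), and output position (w,h) pools over the
  nonempty window win w h of input positions.\<close>
definition max_pool ::
  "('co \<Rightarrow> 'ci) \<Rightarrow> ('wo \<Rightarrow> 'ho \<Rightarrow> ('wi \<times> 'hi) set)
   \<Rightarrow> ('b::finite,'ci::finite,'wi::finite,'hi::finite) tensor
   \<Rightarrow> ('b,'co::finite,'wo::finite,'ho::finite) tensor" where
  "max_pool ch win X =
     (\<chi> idx. case idx of (b, c, w, h) \<Rightarrow>
        Max ((\<lambda>(w', h'). X $ (b, ch c, w', h')) ` win w h))"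

definition avg_pool ::
  "('co \<Rightarrow> 'ci) \<Rightarrow> ('wo \<Rightarrow> 'ho \<Rightarrow> ('wi \<times> 'hi) set)
   \<Rightarrow> ('b::finite,'ci::finite,'wi::finite,'hi::finite) tensor
   \<Rightarrow> ('b,'co::finite,'wo::finite,'ho::finite) tensor" where
  "avg_pool ch win X =
     (\<chi> idx. case idx of (b, c, w, h) \<Rightarrow>
        (\<Sum>(w', h')\<in>win w h. X $ (b, ch c, w', h')) / real (card (win w h)))"

definition admissible_K ::
  "('wi \<Rightarrow> nat) \<Rightarrow> ('hi \<Rightarrow> nat) \<Rightarrow> ('wo \<Rightarrow> nat) \<Rightarrow> ('ho \<Rightarrow> nat)
   \<Rightarrow> (('b::finite,'ci::finite,'wi::finite,'hi::finite) tensor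
        \<Rightarrow> ('b,'co::finite,'wo::finite,'ho::finite) tensor) \<Rightarrow> bool" where
  "admissible_K ewi ehi ewo eho K \<longleftrightarrow>
     (\<exists>P Q Wt. finite P \<and> finite Q \<and> K = conv2d ewi ehi ewo eho P Q Wt) \<or>
     (\<exists>ch win. bij ch \<and> (\<forall>w h. win w h \<noteq> {}) \<and>
        (K = max_pool ch win \<or> K = avg_pool ch win))"

definition bn_mean :: "('b::finite,'c::finite,'w::finite,'h::finite) tensor \<Rightarrow> 'c \<Rightarrow> real" where
  "bn_mean Y c =
     (\<Sum>b\<in>UNIV. \<Sum>w\<in>UNIV. \<Sum>h\<in>UNIV. Y $ (b, c, w, h)) / real (CARD('b) * CARD('w) * CARD('h))"

definition bn_var :: "('b::finite,'c::finite,'w::finite,'h::finite) tensor \<Rightarrow> 'c \<Rightarrow> real" where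
  "bn_var Y c =
     (\<Sum>b\<in>UNIV. \<Sum>w\<in>UNIV. \<Sum>h\<in>UNIV. (Y $ (b, c, w, h) - bn_mean Y c)\<^sup>2)
       / real (CARD('b) * CARD('w) * CARD('h))"

definition batchnorm ::
  "('c \<Rightarrow> real) \<Rightarrow> ('c \<Rightarrow> real) \<Rightarrow> ('b::finite,'c::finite,'w::finite,'h::finite) tensor
   \<Rightarrow> ('b,'c,'w,'h) tensor" where
  "batchnorm \<gamma> \<beta> Y =
     (\<chi> idx. case idx of (b, c, w, h) \<Rightarrow>
        \<gamma> c * (Y $ (b, c, w, h) - bn_mean Y c) / sqrt (bn_var Y c) + \<beta> c)"

end

theory Submission
  imports Defs
begin

text \<open>Each admissible operation is invariant under positive rescaling of its input: ReLU,
  convolution and pooling are positively homogeneous of degree one, and batch normalization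
  divides out any positive factor. So t \<mapsto> f (t X) is constant near t = 1, whence
  f' X = 0; by linearity of the derivatives the cost is L' (f' X) = 0.\<close>

lemma relu_scaleR: "c \<ge> 0 \<Longrightarrow> relu (c *\<^sub>R X) = c *\<^sub>R relu X"
  by (auto simp add: relu_def vec_eq_iff max_def mult_le_0_iff)

lemma padded_scaleR: "padded ewi ehi (c *\<^sub>R X) b ci i j = c * padded ewi ehi X b ci i j"
  by (simp add: padded_def sum_distrib_left)

lemma conv2d_scaleR:
  "conv2d ewi ehi ewo eho P Q Wt (c *\<^sub>R X) = c *\<^sub>R conv2d ewi ehi ewo eho P Q Wt X"
  by (simp add: conv2d_def vec_eq_iff padded_scaleR sum_distrib_left split: prod.splits)
     (simp add: algebra_simps)

lemma avg_pool_scaleR: "avg_pool ch win (c *\<^sub>R X) = c *\<^sub>R avg_pool ch win X"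
  by (simp add: avg_pool_def vec_eq_iff sum_distrib_left case_prod_unfold split: prod.splits)

lemma max_pool_scaleR:
  assumes "\<forall>w h. win w h \<noteq> {}" and "c \<ge> 0"
  shows "max_pool ch win (c *\<^sub>R X) = c *\<^sub>R max_pool ch win X"
proof -
  have mono_scale: "mono (\<lambda>x::real. c * x)"
    using \<open>c \<ge> 0\<close> by (simp add: mono_def mult_left_mono)
  have "Max ((\<lambda>(w', h'). (c *\<^sub>R X) $ (b, ch k, w', h')) ` win w h)
      = c * Max ((\<lambda>(w', h'). X $ (b, ch k, w', h')) ` win w h)" for b k w h
    using mono_Max_commute[OF mono_scale, of "(\<lambda>(w', h'). X $ (b, ch k, w', h')) ` win w h"]
      assms(1)
    by (simp add: image_image case_prod_unfold)
  then show ?thesis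
    unfolding max_pool_def vec_eq_iff by (auto split: prod.splits)
qed

lemma admissible_K_scaleR:
  assumes "admissible_K ewi ehi ewo eho K" and "c \<ge> 0"
  shows "K (c *\<^sub>R X) = c *\<^sub>R K X"
  using assms unfolding admissible_K_def
  by (auto simp: conv2d_scaleR avg_pool_scaleR max_pool_scaleR)

lemma bn_mean_scaleR: "bn_mean (c *\<^sub>R Y) k = c * bn_mean Y k"
  by (simp add: bn_mean_def sum_distrib_left)

lemma bn_var_scaleR: "bn_var (c *\<^sub>R Y) k = c\<^sup>2 * bn_var Y k"
  by (simp add: bn_var_def bn_mean_scaleR sum_distrib_left power_mult_distrib
      right_diff_distrib[symmetric])

text \<open>No positivity of the variance is needed: at zero variance both sides divide by
  sqrt 0 = 0.\<close>
lemma batchnorm_scaleR: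
  assumes "c > 0"
  shows "batchnorm \<gamma> \<beta> (c *\<^sub>R Y) = batchnorm \<gamma> \<beta> Y"
proof -
  have "sqrt (bn_var (c *\<^sub>R Y) k) = c * sqrt (bn_var Y k)" for k
    using assms by (simp add: bn_var_scaleR real_sqrt_mult)
  then show ?thesis
    using assms
    by (auto simp add: batchnorm_def vec_eq_iff bn_mean_scaleR split: prod.splits)
       (simp add: right_diff_distrib[symmetric])
qed

lemma has_derivative_radial_eq_0:
  fixes f :: "'a::real_normed_vector \<Rightarrow> 'b::real_normed_vector"
  assumes deriv: "(f has_derivative f') (at x)"
    and invariant: "\<And>c. c > 0 \<Longrightarrow> f (c *\<^sub>R x) = f x"
  shows "f' x = 0"
proof -
  have "((\<lambda>t. t *\<^sub>R x) has_derivative (\<lambda>t. t *\<^sub>R x)) (at 1)"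
    by (auto intro!: derivative_eq_intros)
  moreover have "(f has_derivative f') (at ((\<lambda>t. t *\<^sub>R x) 1))"
    using deriv by simp
  ultimately have ray: "((\<lambda>t. f (t *\<^sub>R x)) has_derivative (\<lambda>t. f' (t *\<^sub>R x))) (at 1)"
    by (rule has_derivative_compose)
  have const: "((\<lambda>t. f (t *\<^sub>R x)) has_derivative (\<lambda>t. 0)) (at 1)"
  proof (rule has_derivative_transform_within_open[where s="{0<..}" and f="\<lambda>_. f x"])
    show "f x = f (t *\<^sub>R x)" if "t \<in> {0<..}" for t :: real
      using that invariant by simp
  qed auto
  have "(\<lambda>t. f' (t *\<^sub>R x)) = (\<lambda>t. 0)"
    using has_derivative_unique[OF ray const] .
  then show ?thesis
    by (metis scaleR_one)
qed

lemma linear_sum_axis: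
  fixes g :: "real ^ 'n \<Rightarrow> real"
  assumes "linear g"
  shows "(\<Sum>i\<in>UNIV. g (axis i 1) * x $ i) = g x"
proof -
  have "(\<Sum>i\<in>UNIV. g (axis i 1) * x $ i) = g (\<Sum>i\<in>UNIV. x $ i *\<^sub>R axis i 1)"
    by (simp add: linear_sum[OF assms] linear_scale[OF assms] mult.commute)
  also have "(\<Sum>i\<in>UNIV. x $ i *\<^sub>R axis i 1) = x"
    using basis_expansion[of x] by (simp add: scalar_mult_eq_scaleR)
  finally show ?thesis .
qed

theorem theorem1:
  fixes X :: "('b::finite, 'ci::finite, 'wi::finite, 'hi::finite) tensor"
    and \<rho> :: "('b, 'ci, 'wi, 'hi) tensor \<Rightarrow> ('b, 'ci, 'wi, 'hi) tensor"
    and K :: "('b, 'ci, 'wi, 'hi) tensor \<Rightarrow> ('b, 'co::finite, 'wo::finite, 'ho::finite) tensor"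
    and \<gamma> \<beta> :: "'co \<Rightarrow> real"
    and ewi :: "'wi \<Rightarrow> nat" and ehi :: "'hi \<Rightarrow> nat"
    and ewo :: "'wo \<Rightarrow> nat" and eho :: "'ho \<Rightarrow> nat"
    and f :: "('b, 'ci, 'wi, 'hi) tensor \<Rightarrow> ('b, 'co, 'wo, 'ho) tensor"
    and f' :: "('b, 'ci, 'wi, 'hi) tensor \<Rightarrow> ('b, 'co, 'wo, 'ho) tensor"
    and L :: "('b, 'co, 'wo, 'ho) tensor \<Rightarrow> real"
    and L' :: "('b, 'co, 'wo, 'ho) tensor \<Rightarrow> real"
  assumes "bij_betw ewi UNIV {..<CARD('wi)}" and "bij_betw ehi UNIV {..<CARD('hi)}"
    and "bij_betw ewo UNIV {..<CARD('wo)}" and "bij_betw eho UNIV {..<CARD('ho)}"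
    and rho: "\<rho> = id \<or> \<rho> = relu"
    and K: "admissible_K ewi ehi ewo eho K"
    and f: "f = batchnorm \<gamma> \<beta> \<circ> K \<circ> \<rho>"
    and f': "(f has_derivative f') (at X)"
    and "\<forall>c. bn_var (K (\<rho> X)) c > 0"
    and L': "(L has_derivative L') (at (f X))"
  shows "(\<Sum>i\<in>UNIV. L' (f' (axis i 1)) * X $ i) = 0"
proof -
  have "f (c *\<^sub>R X) = f X" if "c > 0" for c
  proof -
    have "\<rho> (c *\<^sub>R X) = c *\<^sub>R \<rho> X"
      using rho relu_scaleR[of c] \<open>c > 0\<close> by auto
    then show ?thesis
      using \<open>c > 0\<close> by (simp add: f admissible_K_scaleR[OF K] batchnorm_scaleR)
  qed
  with f' have "f' X = 0"
    by (rule has_derivative_radial_eq_0)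
  have linear_L': "linear L'"
    using L' by (rule has_derivative_linear)
  have "linear (L' \<circ> f')"
    using linear_compose[OF has_derivative_linear[OF f'] linear_L'] .
  then have "(\<Sum>i\<in>UNIV. L' (f' (axis i 1)) * X $ i) = L' (f' X)"
    using linear_sum_axis by fastforce
  also have "\<dots> = 0"
    using \<open>f' X = 0\<close> linear_0[OF linear_L'] by simp
  finally show ?thesis .
qed

end
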